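(* For the quasi-random router model for any transition matrix $P$ and any initial configuration with $M$ tokens in total, $\Psi_\sigma\le 2\lg(M+1)$.
   Context: $V=\{1,\dots,N\}$, $P$ a stochastic $N\times N$ matrix, $\mathcal N(v)=\{u:P_{v,u}>0\}$, $\delta(v)=|\mathcal N(v)|$; $\lg=\log_2$. The van der Corput function $\psi:\mathbb{Z}_{\ge0}\to[0,1)$ is $\psi(0)=0$ and, for $i>0$ written in binary as $i=\sum_{j=0}^{\lfloor\lg i\rfloor}\beta_j(i)2^j$, $\psi(i)=\sum_{j}\beta_j(i)2^{-(j+1)}$. The quasi-random router: fix an ordering $u_1,\dots,u_{\delta(v)}$ of $\mathcal N(v)$ and set $\sigma_v(i)=u_k$ where $\sum_{j=1}^{k-1}P_{v,u_j}\le\psi(i)<\sum_{j=1}^{k}P_{v,u_j}$. $I_{v,u}[z,z')=|\{j\in\{z,\dots,z'-1\}:\sigma_v(j)=u\}|$ (zero if $z'\le z$). Given $\chi^{(0)}\in\mathbb{Z}_{\ge0}^N$ with $\sum_v\chi^{(0)}_v=M$, set $Z^{(t)}_{v,u}=I_{v,u}\big[\sum_{s=0}^{t-1}\chi^{(s)}_v,\sum_{s=0}^{t}\chi^{(s)}_v\big)$, $\chi^{(t+1)}_u=\sum_vZ^{(t)}_{v,u}$; $\Psi_\sigma=\sup_{v,\,u\in\mathcal N(v),\,t\ge0}|Z^{(t)}_{v,u}-\chi^{(t)}_vP_{v,u}|$. *)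

theory Defs
  imports Complex_Main
begin

text \<open>Vertex set V = {1..N}; transition matrix P :: nat => nat => real (entries outside V irrelevant).\<close>

definition nbr :: "nat \<Rightarrow> (nat \<Rightarrow> nat \<Rightarrow> real) \<Rightarrow> nat \<Rightarrow> nat set" where
  "nbr N P v = {u \<in> {1..N}. P v u > 0}"

definition stochastic :: "nat \<Rightarrow> (nat \<Rightarrow> nat \<Rightarrow> real) \<Rightarrow> bool" where
  "stochastic N P \<longleftrightarrow> (\<forall>v\<in>{1..N}. (\<forall>u\<in>{1..N}. P v u \<ge> 0) \<and> (\<Sum>u\<in>{1..N}. P v u) = 1)"

text \<open>van der Corput function: binary digits of i mirrored about the binary point.
  Bits beyond floor(lg i) are zero, so summing over j < i+1 is harmless (i < 2^(i+1)).\<close>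
definition vdc :: "nat \<Rightarrow> real" where
  "vdc i = (if i = 0 then 0 else (\<Sum>j<Suc i. real ((i div 2 ^ j) mod 2) / 2 ^ (j + 1)))"

text \<open>Quasi-random router: ord v = the fixed ordering u_1,...,u_delta(v) of N(v) (0-indexed list).\<close>
definition prefP :: "(nat \<Rightarrow> nat \<Rightarrow> real) \<Rightarrow> (nat \<Rightarrow> nat list) \<Rightarrow> nat \<Rightarrow> nat \<Rightarrow> real" where
  "prefP P ord v k = (\<Sum>j<k. P v (ord v ! j))"

definition router :: "(nat \<Rightarrow> nat \<Rightarrow> real) \<Rightarrow> (nat \<Rightarrow> nat list) \<Rightarrow> nat \<Rightarrow> nat \<Rightarrow> nat" where
  "router P ord v i = ord v ! (THE k. k < length (ord v) \<and>
       prefP P ord v k \<le> vdc i \<and> vdc i < prefP P ord v (Suc k))"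

definition Icount :: "(nat \<Rightarrow> nat \<Rightarrow> real) \<Rightarrow> (nat \<Rightarrow> nat list) \<Rightarrow> nat \<Rightarrow> nat \<Rightarrow> nat \<Rightarrow> nat \<Rightarrow> nat" where
  "Icount P ord v u z z' = card {j. z \<le> j \<and> j < z' \<and> router P ord v j = u}"

text \<open>Auxiliary state: (chi^(t), cumulative sums \<Sum>_{s<t} chi^(s)).\<close>
primrec qstate :: "nat \<Rightarrow> (nat \<Rightarrow> nat \<Rightarrow> real) \<Rightarrow> (nat \<Rightarrow> nat list) \<Rightarrow> (nat \<Rightarrow> nat) \<Rightarrow> nat
    \<Rightarrow> (nat \<Rightarrow> nat) \<times> (nat \<Rightarrow> nat)" where
  "qstate N P ord chi0 0 = (chi0, (\<lambda>_. 0))"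
| "qstate N P ord chi0 (Suc t) =
     (let c = fst (qstate N P ord chi0 t); a = snd (qstate N P ord chi0 t)
      in ((\<lambda>u. \<Sum>v\<in>{1..N}. Icount P ord v u (a v) (a v + c v)), (\<lambda>v. a v + c v)))"

definition chi :: "nat \<Rightarrow> (nat \<Rightarrow> nat \<Rightarrow> real) \<Rightarrow> (nat \<Rightarrow> nat list) \<Rightarrow> (nat \<Rightarrow> nat) \<Rightarrow> nat \<Rightarrow> nat \<Rightarrow> nat" where
  "chi N P ord chi0 t = fst (qstate N P ord chi0 t)"

definition Zflow :: "nat \<Rightarrow> (nat \<Rightarrow> nat \<Rightarrow> real) \<Rightarrow> (nat \<Rightarrow> nat list) \<Rightarrow> (nat \<Rightarrow> nat) \<Rightarrow> nat \<Rightarrow> nat \<Rightarrow> nat \<Rightarrow> nat" where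
  "Zflow N P ord chi0 t v u =
     Icount P ord v u (\<Sum>s<t. chi N P ord chi0 s v) (\<Sum>s<Suc t. chi N P ord chi0 s v)"

end

theory Submission
  imports Defs
begin

text \<open>The van der Corput sequence is self-similar: \<open>vdc (2 j) = vdc j / 2\<close> and
  \<open>vdc (2 j + 1) = (vdc j + 1) / 2\<close>. Among \<open>n\<close> consecutive indices, those with value below
  \<open>c\<close> therefore correspond to about \<open>n / 2\<close> consecutive indices with value below \<open>2 c\<close>
  (if \<open>c \<le> 1/2\<close>) or \<open>2 c - 1\<close> (otherwise), and rounding \<open>n / 2\<close> costs at most \<open>1/2\<close>.
  Induction on \<open>n\<close> bounds the discrepancy \<open>|#{j \<in> [a, a+n). vdc j < c} - n c|\<close> by
  \<open>lg (n + 1)\<close>. A vertex sends its \<open>j\<close>-th token to \<open>u\<close> exactly when \<open>vdc j\<close> lies in an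
  interval of length \<open>P v u\<close>, so each routing error is a difference of two such discrepancies
  with \<open>n = \<chi>\<^sub>v \<le> M\<close>, as tokens are conserved.\<close>

lemma vdc_eq_digit_sum:
  assumes "i < 2 ^ K"
  shows "vdc i = (\<Sum>j<K. real ((i div 2 ^ j) mod 2) / 2 ^ (j + 1))"
proof -
  let ?d = "\<lambda>j. real ((i div 2 ^ j) mod 2) / 2 ^ (j + 1)"
  have truncate: "(\<Sum>j<L'. ?d j) = (\<Sum>j<L. ?d j)" if "i < 2 ^ L" "L \<le> L'" for L L'
  proof (rule sum.mono_neutral_right)
    show "\<forall>j\<in>{..<L'} - {..<L}. ?d j = 0"
    proof
      fix j assume "j \<in> {..<L'} - {..<L}"
      then have "(2::nat) ^ L \<le> 2 ^ j" by (simp add: power_increasing)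
      with that(1) have "i < 2 ^ j" by linarith
      then show "?d j = 0" by simp
    qed
  qed (use that in auto)
  have "vdc i = (\<Sum>j<Suc i. ?d j)"
    by (simp add: vdc_def)
  also have "\<dots> = (\<Sum>j<max K (Suc i). ?d j)"
    by (rule truncate[symmetric]) (use less_trans[OF lessI less_exp] in auto)
  also have "\<dots> = (\<Sum>j<K. ?d j)"
    by (rule truncate) (use assms in auto)
  finally show ?thesis .
qed

lemma vdc_div_mod: "vdc i = real (i mod 2) / 2 + vdc (i div 2) / 2"
proof -
  let ?d = "\<lambda>i j. real ((i div 2 ^ j) mod 2) / 2 ^ (j + 1)"
  have "i div 2 < 2 ^ (i div 2)" by (rule less_exp)
  moreover have "i \<le> 2 * (i div 2) + 1" by presburger
  ultimately have "i < 2 * 2 ^ (i div 2)" by linarith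
  then have "vdc i = (\<Sum>j<Suc (i div 2). ?d i j)"
    by (intro vdc_eq_digit_sum) simp
  also have "\<dots> = ?d i 0 + (\<Sum>j<i div 2. ?d i (Suc j))"
    by (rule sum.lessThan_Suc_shift)
  also have "(\<Sum>j<i div 2. ?d i (Suc j)) = (\<Sum>j<i div 2. ?d (i div 2) j) / 2"
    by (simp add: sum_divide_distrib div_mult2_eq)
  also have "\<dots> = vdc (i div 2) / 2"
    using vdc_eq_digit_sum[OF less_exp[of "i div 2"]] by simp
  finally show ?thesis by simp
qed

lemma vdc_double: "vdc (2 * j) = vdc j / 2"
  using vdc_div_mod[of "2 * j"] by simp

lemma vdc_double_Suc: "vdc (Suc (2 * j)) = vdc j / 2 + 1 / 2"
  using vdc_div_mod[of "Suc (2 * j)"] by simp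

lemma vdc_bounds: "0 \<le> vdc i \<and> vdc i < 1"
proof (induction i rule: less_induct)
  case (less i)
  show ?case
  proof (cases "i = 0")
    case False
    then have "0 \<le> vdc (i div 2) \<and> vdc (i div 2) < 1" using less by simp
    moreover have "real (i mod 2) \<le> 1" by simp
    ultimately show ?thesis using vdc_div_mod[of i] by simp
  qed (simp add: vdc_def)
qed

lemma sum_interval_parity_split:
  fixes g :: "nat \<Rightarrow> 'a::comm_monoid_add"
  shows "(\<Sum>j\<in>{a..<a+n}. g j) = (\<Sum>j\<in>{(a+1) div 2..<(a+n+1) div 2}. g (2*j))
          + (\<Sum>j\<in>{a div 2..<(a+n) div 2}. g (Suc (2*j)))"
proof (induction n)
  case (Suc n)
  let ?E = "\<lambda>k. \<Sum>j\<in>{(a+1) div 2..<k}. g (2*j)"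
  let ?O = "\<lambda>k. \<Sum>j\<in>{a div 2..<k}. g (Suc (2*j))"
  have "(\<Sum>j\<in>{a..<a+Suc n}. g j) = ?E ((a+n+1) div 2) + ?O ((a+n) div 2) + g (a+n)"
    using Suc.IH by simp
  also have "\<dots> = ?E ((a+Suc n+1) div 2) + ?O ((a+Suc n) div 2)"
  proof (cases "even (a + n)")
    case True
    then obtain m where m: "a + n = 2 * m" by blast
    then have "(a + Suc n + 1) div 2 = Suc m" "(a + n + 1) div 2 = m"
      "(a + Suc n) div 2 = m" "(a + n) div 2 = m" "(a + 1) div 2 \<le> m"
      by presburger+
    then show ?thesis using m by (simp add: sum.op_ivl_Suc ac_simps)
  next
    case False
    then obtain m where m: "a + n = 2 * m + 1" by (rule oddE)
    then have "(a + Suc n + 1) div 2 = Suc m" "(a + n + 1) div 2 = Suc m"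
      "(a + Suc n) div 2 = Suc m" "(a + n) div 2 = m" "a div 2 \<le> m"
      by presburger+
    then show ?thesis using m by (simp add: sum.op_ivl_Suc add.assoc)
  qed
  finally show ?case .
qed simp

definition vdc_count :: "real \<Rightarrow> nat \<Rightarrow> nat \<Rightarrow> real" where
  "vdc_count c a n = (\<Sum>j\<in>{a..<a+n}. if vdc j < c then 1 else 0)"

lemma vdc_count_le_half:
  assumes "c \<le> 1/2"
  shows "vdc_count c a n = vdc_count (2*c) ((a+1) div 2) ((a+n+1) div 2 - (a+1) div 2)"
proof -
  let ?ind = "\<lambda>c j. if vdc j < c then 1 else (0::real)"
  have odd_part: "(\<Sum>j\<in>{a div 2..<(a+n) div 2}. ?ind c (Suc (2*j))) = 0"
  proof (intro sum.neutral ballI)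
    fix j
    show "?ind c (Suc (2*j)) = 0" using assms vdc_bounds[of j] by (simp add: vdc_double_Suc)
  qed
  have "(a+1) div 2 + ((a+n+1) div 2 - (a+1) div 2) = (a+n+1) div 2"
    by (simp add: div_le_mono)
  then have "vdc_count (2*c) ((a+1) div 2) ((a+n+1) div 2 - (a+1) div 2)
      = (\<Sum>j\<in>{(a+1) div 2..<(a+n+1) div 2}. ?ind c (2*j))"
    unfolding vdc_count_def by (intro sum.cong) (auto simp: vdc_double)
  then show ?thesis
    unfolding vdc_count_def sum_interval_parity_split[of "?ind c"] odd_part by simp
qed

lemma vdc_count_gt_half:
  assumes "1/2 < c"
  shows "vdc_count c a n = real ((a+n+1) div 2 - (a+1) div 2)
           + vdc_count (2*c-1) (a div 2) ((a+n) div 2 - a div 2)"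
proof -
  let ?ind = "\<lambda>c j. if vdc j < c then 1 else (0::real)"
  have "(\<Sum>j\<in>{(a+1) div 2..<(a+n+1) div 2}. ?ind c (2*j))
      = (\<Sum>j\<in>{(a+1) div 2..<(a+n+1) div 2}. 1)"
  proof (intro sum.cong refl)
    fix j
    show "?ind c (2*j) = 1" using assms vdc_bounds[of j] by (simp add: vdc_double)
  qed
  then have even_part: "(\<Sum>j\<in>{(a+1) div 2..<(a+n+1) div 2}. ?ind c (2*j))
      = real ((a+n+1) div 2 - (a+1) div 2)"
    by simp
  have "a div 2 + ((a+n) div 2 - a div 2) = (a+n) div 2"
    by (simp add: div_le_mono)
  then have "vdc_count (2*c-1) (a div 2) ((a+n) div 2 - a div 2)
      = (\<Sum>j\<in>{a div 2..<(a+n) div 2}. ?ind c (Suc (2*j)))"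
    unfolding vdc_count_def by (intro sum.cong) (auto simp: vdc_double_Suc)
  then show ?thesis
    unfolding vdc_count_def sum_interval_parity_split[of "?ind c"] even_part by simp
qed

text \<open>The value \<open>1\<close> at \<open>n = 2\<close>, rather than \<open>lg 3\<close>, is what lets the halving step
  reach \<open>n = 3\<close>.\<close>
definition vdc_discrepancy_bound :: "nat \<Rightarrow> real" where
  "vdc_discrepancy_bound n = (if n = 2 then 1 else log 2 (real n + 1))"

lemma vdc_discrepancy_bound_le_log: "vdc_discrepancy_bound n \<le> log 2 (real n + 1)"
  by (simp add: vdc_discrepancy_bound_def)

lemma vdc_discrepancy_bound_halving:
  assumes "2 \<le> n" "n div 2 \<le> m" "m \<le> (n+1) div 2"
  shows "vdc_discrepancy_bound m + (if even n then 0 else 1/2) \<le> vdc_discrepancy_bound n"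
proof (cases "even n")
  case True
  then have m: "n = 2 * m" using assms(2,3) by presburger
  show ?thesis
  proof (cases "m = 1")
    case False
    then have "vdc_discrepancy_bound n = log 2 (real n + 1)"
      using m by (simp add: vdc_discrepancy_bound_def)
    moreover have "log 2 (real m + 1) \<le> log 2 (real n + 1)" using m by simp
    ultimately have "vdc_discrepancy_bound m \<le> vdc_discrepancy_bound n"
      using vdc_discrepancy_bound_le_log[of m] by linarith
    with True show ?thesis by simp
  qed (use m in \<open>simp add: vdc_discrepancy_bound_def\<close>)
next
  case False
  then obtain k where n: "n = 2 * k + 1" by (rule oddE)
  with assms have "1 \<le> k" "m \<le> k + 1" by simp_all
  have "n \<noteq> 2" using n by presburger
  then have "vdc_discrepancy_bound n = log 2 (real n + 1)"
    by (simp add: vdc_discrepancy_bound_def)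
  also have "\<dots> = log 2 (2 * real k + 2)"
    by (intro arg_cong[where f = "log 2"]) (simp add: n)
  finally have bound_n: "vdc_discrepancy_bound n = log 2 (2 * real k + 2)" .
  have "vdc_discrepancy_bound m + 1/2 \<le> vdc_discrepancy_bound n"
  proof (cases "k = 1")
    case True
    then have "vdc_discrepancy_bound m \<le> 1"
      using \<open>m \<le> k + 1\<close> by (auto simp: vdc_discrepancy_bound_def le_Suc_eq)
    moreover have "log 2 (4::real) = 2"
      using log_pow_cancel[of 2 2] by simp
    ultimately show ?thesis using bound_n True by simp
  next
    case False
    with \<open>1 \<le> k\<close> have "2 \<le> k" by simp
    have "sqrt 2 \<le> (3/2::real)" by (rule real_le_lsqrt) (auto simp: power2_eq_square)
    then have "(real k + 2) * sqrt 2 \<le> (real k + 2) * (3/2)"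
      by (intro mult_left_mono) auto
    also have "\<dots> \<le> 2 * real k + 2" using \<open>2 \<le> k\<close> by simp
    finally have "log 2 ((real k + 2) * sqrt 2) \<le> log 2 (2 * real k + 2)" by simp
    moreover have "log 2 ((real k + 2) * sqrt 2) = log 2 (real k + 2) + 1/2"
      by (subst log_mult) (simp_all add: log_def ln_sqrt)
    moreover have "log 2 (real m + 1) \<le> log 2 (real k + 2)"
      using \<open>m \<le> k + 1\<close> by simp
    ultimately show ?thesis
      using bound_n vdc_discrepancy_bound_le_log[of m] by linarith
  qed
  with False show ?thesis by simp
qed

text \<open>The two lengths count the even and the odd numbers in \<open>{a..<a+n}\<close>.\<close>
lemma interval_half_lengths:
  fixes a n :: nat
  defines "n0 \<equiv> (a+n+1) div 2 - (a+1) div 2" and "n1 \<equiv> (a+n) div 2 - a div 2"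
  shows "n0 + n1 = n \<and> n div 2 \<le> n0 \<and> n0 \<le> (n+1) div 2 \<and> n div 2 \<le> n1 \<and> n1 \<le> (n+1) div 2"
  unfolding n0_def n1_def by (cases "even a"; cases "even n") (auto elim!: evenE oddE)

lemma vdc_discrepancy_step:
  fixes e w d :: real
  assumes "2 \<le> n" "n div 2 \<le> m" "m \<le> (n+1) div 2"
    and "\<bar>e\<bar> \<le> vdc_discrepancy_bound m" "0 \<le> w" "w \<le> 1/2"
    and "\<bar>d\<bar> \<le> (if even n then 0 else 1)"
  shows "\<bar>e + w * d\<bar> \<le> vdc_discrepancy_bound n"
proof -
  have "\<bar>w * d\<bar> \<le> (if even n then 0 else 1/2)"
    using mult_mono[of w "1/2" "\<bar>d\<bar>" 1] assms(5-7) by (auto simp: abs_mult)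
  then show ?thesis
    using vdc_discrepancy_bound_halving[OF assms(1-3)] assms(4) abs_triangle_ineq[of e "w * d"]
    by (cases "even n") auto
qed

lemma vdc_count_discrepancy:
  assumes "0 \<le> c" "c \<le> 1"
  shows "\<bar>vdc_count c a n - real n * c\<bar> \<le> vdc_discrepancy_bound n"
  using assms
proof (induction n arbitrary: a c rule: less_induct)
  case (less n)
  consider "n = 0" | "n = 1" | "2 \<le> n" by linarith
  then show ?case
  proof cases
    case 3
    define n0 where "n0 = (a+n+1) div 2 - (a+1) div 2"
    define n1 where "n1 = (a+n) div 2 - a div 2"
    have halves: "n0 + n1 = n" "n div 2 \<le> n0" "n0 \<le> (n+1) div 2" "n div 2 \<le> n1" "n1 \<le> (n+1) div 2"
      using interval_half_lengths[of a n] unfolding n0_def n1_def by auto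
    with 3 have "n0 < n" "n1 < n" by auto
    have dev: "\<bar>2 * real n0 - real n\<bar> \<le> (if even n then 0 else 1)"
      using halves(2,3) by (cases "even n") (auto elim!: evenE oddE)
    show ?thesis
    proof (cases "c \<le> 1/2")
      case True
      have "vdc_count c a n - real n * c
          = (vdc_count (2*c) ((a+1) div 2) n0 - real n0 * (2*c)) + c * (2 * real n0 - real n)"
        using vdc_count_le_half[OF True, of a n] unfolding n0_def[symmetric]
        by (simp add: algebra_simps)
      also have "\<bar>\<dots>\<bar> \<le> vdc_discrepancy_bound n"
        using less.IH[OF \<open>n0 < n\<close>] less.prems True
        by (intro vdc_discrepancy_step[OF 3 halves(2,3)] dev) auto
      finally show ?thesis .
    next
      case False
      \<comment> \<open>\<open>n - 2 n1 = 2 n0 - n\<close>, so both cases share the rounding term \<open>dev\<close>\<close>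
      have "vdc_count c a n - real n * c
          = (vdc_count (2*c-1) (a div 2) n1 - real n1 * (2*c-1)) + (1 - c) * (2 * real n0 - real n)"
        using vdc_count_gt_half[of c a n] False halves(1)[symmetric]
        unfolding n0_def[symmetric] n1_def[symmetric] by (simp add: algebra_simps)
      also have "\<bar>\<dots>\<bar> \<le> vdc_discrepancy_bound n"
        using less.IH[OF \<open>n1 < n\<close>] less.prems False
        by (intro vdc_discrepancy_step[OF 3 halves(4,5)] dev) auto
      finally show ?thesis .
    qed
  qed (use less.prems in \<open>auto simp: vdc_count_def vdc_discrepancy_bound_def\<close>)
qed

lemma vdc_count_discrepancy_log:
  assumes "0 \<le> c" "c \<le> 1"
  shows "\<bar>vdc_count c a n - real n * c\<bar> \<le> log 2 (real n + 1)"
  using vdc_count_discrepancy[OF assms] vdc_discrepancy_bound_le_log order_trans by blast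

lemma real_card_interval_filter:
  fixes z n :: nat
  shows "real (card {j. z \<le> j \<and> j < z + n \<and> Q j}) = (\<Sum>j\<in>{z..<z+n}. if Q j then 1 else 0)"
proof -
  have "{j. z \<le> j \<and> j < z + n \<and> Q j} = {j\<in>{z..<z+n}. Q j}" by auto
  then have "real (card {j. z \<le> j \<and> j < z + n \<and> Q j}) = (\<Sum>j\<in>{j\<in>{z..<z+n}. Q j}. 1)"
    by simp
  also have "\<dots> = (\<Sum>j\<in>{z..<z+n}. if Q j then 1 else 0)"
    by (rule sum.inter_filter) simp
  finally show ?thesis .
qed

lemma exists_bracketing_index:
  fixes f :: "nat \<Rightarrow> 'a::linorder"
  assumes "f 0 \<le> x" "x < f L"
  shows "\<exists>k<L. f k \<le> x \<and> x < f (Suc k)"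
  using assms
proof (induction L)
  case (Suc L)
  show ?case
  proof (cases "x < f L")
    case True
    then show ?thesis using Suc by (metis less_SucI)
  next
    case False
    then show ?thesis using Suc.prems by (intro exI[of _ L]) auto
  qed
qed simp

locale quasi_random_router =
  fixes N :: nat and P :: "nat \<Rightarrow> nat \<Rightarrow> real" and ord :: "nat \<Rightarrow> nat list"
  assumes stochastic: "stochastic N P"
    and ord_nbr: "\<forall>v\<in>{1..N}. distinct (ord v) \<and> set (ord v) = nbr N P v"
begin

context
  fixes v assumes v: "v \<in> {1..N}"
begin

lemma distinct_ord: "distinct (ord v)" and set_ord: "set (ord v) = nbr N P v"
  using ord_nbr v by auto

lemma prefP_Suc: "prefP P ord v (Suc k) = prefP P ord v k + P v (ord v ! k)"
  by (simp add: prefP_def)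

lemma prefP_mono:
  assumes "i \<le> j" "j \<le> length (ord v)"
  shows "prefP P ord v i \<le> prefP P ord v j"
proof -
  have "0 < P v (ord v ! k)" if "k < length (ord v)" for k
    using that set_ord nth_mem by (fastforce simp: nbr_def)
  then show ?thesis
    unfolding prefP_def using assms by (intro sum_mono2) (auto intro: less_imp_le)
qed

lemma prefP_length: "prefP P ord v (length (ord v)) = 1"
proof -
  have "prefP P ord v (length (ord v)) = (\<Sum>u\<in>set (ord v). P v u)"
    unfolding prefP_def by (rule sum.reindex_bij_betw[OF bij_betw_nth[OF distinct_ord refl refl]])
  also have "\<dots> = (\<Sum>u\<in>{1..N}. P v u)"
  proof (rule sum.mono_neutral_left)
    show "set (ord v) \<subseteq> {1..N}" using set_ord by (auto simp: nbr_def)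
    show "\<forall>u\<in>{1..N} - set (ord v). P v u = 0"
      using set_ord stochastic v by (force simp: nbr_def stochastic_def)
  qed simp
  also have "\<dots> = 1" using stochastic v by (simp add: stochastic_def)
  finally show ?thesis .
qed

lemma prefP_bounds: "k \<le> length (ord v) \<Longrightarrow> 0 \<le> prefP P ord v k \<and> prefP P ord v k \<le> 1"
  using prefP_mono[of 0 k] prefP_mono[of k "length (ord v)"] prefP_length
  by (simp add: prefP_def)

lemma vdc_bracketed: "\<exists>k<length (ord v). prefP P ord v k \<le> vdc j \<and> vdc j < prefP P ord v (Suc k)"
  using exists_bracketing_index[of "prefP P ord v" "vdc j" "length (ord v)"]
    vdc_bounds[of j] prefP_length by (simp add: prefP_def)

lemma router_eq_nth_iff:
  assumes k: "k < length (ord v)"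
  shows "router P ord v j = ord v ! k \<longleftrightarrow>
     prefP P ord v k \<le> vdc j \<and> vdc j < prefP P ord v (Suc k)"
proof -
  define brackets where "brackets k \<longleftrightarrow> k < length (ord v)
      \<and> prefP P ord v k \<le> vdc j \<and> vdc j < prefP P ord v (Suc k)" for k
  have unique: "k1 = k2" if "brackets k1" "brackets k2" for k1 k2
  proof (rule ccontr)
    assume "k1 \<noteq> k2"
    then consider "Suc k1 \<le> k2" | "Suc k2 \<le> k1" by linarith
    then show False
      using that prefP_mono[of "Suc k1" k2] prefP_mono[of "Suc k2" k1]
      unfolding brackets_def by cases fastforce+
  qed
  obtain k0 where k0: "brackets k0"
    using vdc_bracketed unfolding brackets_def by blast
  then have "(THE k. brackets k) = k0" using unique by blast
  then have "router P ord v j = ord v ! k0" unfolding router_def brackets_def by simp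
  then have "router P ord v j = ord v ! k \<longleftrightarrow> k0 = k"
    using nth_eq_iff_index_eq[OF distinct_ord] k k0 unfolding brackets_def by auto
  also have "\<dots> \<longleftrightarrow> brackets k" using k0 unique by blast
  finally show ?thesis using k unfolding brackets_def by simp
qed

lemma router_in_nbr: "router P ord v j \<in> nbr N P v"
proof -
  obtain k where "k < length (ord v)" "prefP P ord v k \<le> vdc j" "vdc j < prefP P ord v (Suc k)"
    using vdc_bracketed by blast
  then show ?thesis
    using router_eq_nth_iff set_ord nth_mem by metis
qed

lemma sum_Icount: "(\<Sum>u\<in>{1..N}. Icount P ord v u z (z + n)) = n"
proof -
  have "real (\<Sum>u\<in>{1..N}. Icount P ord v u z (z + n))
      = (\<Sum>j\<in>{z..<z+n}. \<Sum>u\<in>{1..N}. if router P ord v j = u then 1 else 0)"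
    unfolding Icount_def of_nat_sum real_card_interval_filter by (rule sum.swap)
  also have "\<dots> = (\<Sum>j\<in>{z..<z+n}. 1)"
    using router_in_nbr by (intro sum.cong refl) (simp add: nbr_def)
  also have "\<dots> = real n" by simp
  finally show ?thesis by (simp only: of_nat_eq_iff)
qed

lemma Icount_discrepancy:
  assumes u: "u \<in> nbr N P v"
  shows "\<bar>real (Icount P ord v u z (z + n)) - real n * P v u\<bar> \<le> 2 * log 2 (real n + 1)"
proof -
  obtain k where k: "k < length (ord v)" "ord v ! k = u"
    using u set_ord by (metis in_set_conv_nth)
  define a where "a = prefP P ord v k"
  define b where "b = prefP P ord v (Suc k)"
  have "b - a = P v u" using k unfolding a_def b_def by (simp add: prefP_Suc)
  moreover have "0 \<le> a" "a \<le> b" "b \<le> 1"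
    using prefP_bounds[of "Suc k"] prefP_mono[of k "Suc k"] prefP_bounds[of k] k
    unfolding a_def b_def by auto
  moreover have "real (Icount P ord v u z (z + n)) = vdc_count b z n - vdc_count a z n"
    unfolding Icount_def real_card_interval_filter vdc_count_def sum_subtractf[symmetric]
    using router_eq_nth_iff[OF k(1)] \<open>a \<le> b\<close> unfolding k(2) a_def[symmetric] b_def[symmetric]
    by (intro sum.cong) auto
  ultimately show ?thesis
    using vdc_count_discrepancy_log[of a z n] vdc_count_discrepancy_log[of b z n]
    by (simp add: algebra_simps)
qed

end

lemma chi_Suc:
  "chi N P ord chi0 (Suc t) u = (\<Sum>v\<in>{1..N}. Icount P ord v u
      (snd (qstate N P ord chi0 t) v) (snd (qstate N P ord chi0 t) v + chi N P ord chi0 t v))"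
  by (simp add: chi_def Let_def)

lemma sum_chi: "(\<Sum>v\<in>{1..N}. chi N P ord chi0 t v) = (\<Sum>v\<in>{1..N}. chi0 v)"
proof (induction t)
  case (Suc t)
  have "(\<Sum>u\<in>{1..N}. chi N P ord chi0 (Suc t) u)
      = (\<Sum>v\<in>{1..N}. \<Sum>u\<in>{1..N}. Icount P ord v u
          (snd (qstate N P ord chi0 t) v) (snd (qstate N P ord chi0 t) v + chi N P ord chi0 t v))"
    unfolding chi_Suc by (rule sum.swap)
  also have "\<dots> = (\<Sum>v\<in>{1..N}. chi N P ord chi0 t v)"
    by (intro sum.cong refl sum_Icount)
  finally show ?case using Suc by simp
qed (simp add: chi_def)

end

theorem lemma5p6:
  fixes N :: nat and P :: "nat \<Rightarrow> nat \<Rightarrow> real" and ord :: "nat \<Rightarrow> nat list"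
    and chi0 :: "nat \<Rightarrow> nat" and M :: nat
  assumes "stochastic N P"
    and "\<forall>v\<in>{1..N}. distinct (ord v) \<and> set (ord v) = nbr N P v"
    and "M = (\<Sum>v\<in>{1..N}. chi0 v)"
  shows "\<forall>t v u. v \<in> {1..N} \<longrightarrow> u \<in> nbr N P v \<longrightarrow>
           \<bar>real (Zflow N P ord chi0 t v u) - real (chi N P ord chi0 t v) * P v u\<bar>
             \<le> 2 * log 2 (real M + 1)"
proof (intro allI impI)
  fix t v u assume v: "v \<in> {1..N}" and u: "u \<in> nbr N P v"
  interpret quasi_random_router N P ord using assms(1,2) by unfold_locales
  let ?z = "\<Sum>s<t. chi N P ord chi0 s v" and ?n = "chi N P ord chi0 t v"
  have "?n \<le> (\<Sum>w\<in>{1..N}. chi N P ord chi0 t w)"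
    using v by (intro member_le_sum) auto
  also have "\<dots> = M" using sum_chi assms(3) by simp
  finally have "log 2 (real ?n + 1) \<le> log 2 (real M + 1)" by simp
  moreover have "Zflow N P ord chi0 t v u = Icount P ord v u ?z (?z + ?n)"
    by (simp add: Zflow_def)
  ultimately show "\<bar>real (Zflow N P ord chi0 t v u) - real ?n * P v u\<bar> \<le> 2 * log 2 (real M + 1)"
    using Icount_discrepancy[OF v u, of ?z ?n] by linarith
qed

end
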